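(* Assume $\chi$ is weakly generic, let $\sigma=\sigma_{a,b}$ be a Serre weight with $\mathcal{S}(\chi_1,\chi_2,\sigma)\neq\varnothing$, let $(J,x)$ be its maximal element, and let $s,t,r,\mathcal{I}_\tau,\xi_\tau$ be as in the context. Then for every $\tau\in\Sigma$ and every $c\in\mathcal{I}_\tau$ we have $v_p(\xi_\tau-c(p^f-1))>0$ if and only if either $c=t_\tau$, or [$t_\kappa=0$, $s_\kappa=p-1+e$ and $r_\kappa=p$ for all $\kappa\in\Sigma$, and $c=p$].
   Context: Let $p$ be a prime, $K/\mathbf{Q}_p$ finite with residue field $k$, residue degree $f$, ramification index $e$; $I_K$ inertia; $v_p$ is the $p$-adic valuation on $\mathbf{Q}$. Fix $\varpi\in\overline{K}$ with $\varpi^{p^f-1}$ a uniformiser; $\omega\colon G_K\to k^\times$ sends $g$ to the reduction of $g(\varpi)/\varpi$. $\Sigma=\mathrm{Hom}_{\mathbf{F}_p}(k,\overline{\mathbf{F}}_p)$, $\varphi(x)=x^p$, $\omega_\tau=\tau\circ\omega$, $\Omega_{\tau,a}=\sum_{i=0}^{f-1}p^ia_{\tau\circ\varphi^i}$. $\chi_1,\chi_2\colon G_K\to\overline{\mathbf{F}}_p^\times$ continuous, $\chi=\chi_1\chi_2^{-1}=\psi\prod_\tau\omega_\tau^{n_\tau}$, $\psi$ unramified, $n_\tau\in[1,p]$, some $n_\tau<p$. Weakly generic: $n_\tau\in[e,p-e]$ for all $\tau$. Serre weight $\sigma_{a,b}=\bigotimes_\tau(\det^{b_\tau}\otimes\mathrm{Sym}^{a_\tau-b_\tau}k^2)\otimes_{k,\tau}\overline{\mathbf{F}}_p$,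 $a_\tau-b_\tau\in[0,p-1]$; $r_\tau=a_\tau-b_\tau+1$. $\mathcal{S}(\chi_1,\chi_2,\sigma)$: pairs $(J,x)$, $J\subseteq\Sigma$, $x_\tau\in[0,e-1]$, with $\chi_1|_{I_K}=\prod_{\tau\in J}\omega_\tau^{a_\tau+1+x_\tau}\prod_{\tau\notin J}\omega_\tau^{b_\tau+x_\tau}$ and $\chi_2|_{I_K}=\prod_{\tau\notin J}\omega_\tau^{a_\tau+e-x_\tau}\prod_{\tau\in J}\omega_\tau^{b_\tau+e-1-x_\tau}$. $s(J,x)_\tau=r_\tau+x_\tau$ if $\tau\in J$, $x_\tau$ if $\tau\notin J$. Order: $(J,x)\preceq(J',x')$ iff $\Omega_{\tau,s(J',x')-s(J,x)}\in(p^f-1)\mathbf{Z}_{\ge0}$ for all $\tau$; a non-empty $\mathcal{S}$ has a unique maximal element. For the maximal $(J,x)$: $s=s(J,x)$, $t_\tau=a_\tau-b_\tau+e-s_\tau$, $\mathcal{I}_\tau=[0,s_\tau-1]$ if $\tau\notin J$, $\mathcal{I}_\tau=\{t_\tau\}\cup[r_\tau,s_\tau-1]$ if $\tau\in J$, and $\xi_\tau=(p^f-1)s_\tau+\Omega_{\tau,s-t}$. *)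

theory Defs
  imports "HOL-Computational_Algebra.Primes" "HOL-Library.Extended_Nat"
begin

text \<open>The embeddings \<Sigma> = Hom(k, Fbar_p) are indexed by {0..<f}:
  fix tau_0 and let index j stand for tau_0 \<circ> phi^j, so that tau_j \<circ> phi^i = tau_((j+i) mod f).
  Families (a_tau) are functions nat \<Rightarrow> int, only values at j < f matter.
  Since omega_(tau \<circ> phi) = omega_tau^p and omega_(tau_0) restricted to inertia has exact order
  p^f - 1, a character of G_K restricted to I_K is omega_(tau_0)^h for an integer h determined
  modulo p^f - 1, and prod_tau omega_tau^(y_tau) = omega_(tau_0)^(Omega_(tau_0,y)).\<close>

definition vp :: "nat \<Rightarrow> int \<Rightarrow> enat" where
  "vp p n = (if n = 0 then \<infinity> else enat (multiplicity (int p) n))"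

definition Omega :: "nat \<Rightarrow> nat \<Rightarrow> (nat \<Rightarrow> int) \<Rightarrow> nat \<Rightarrow> int" where
  "Omega p f a j = (\<Sum>i<f. int p ^ i * a ((j + i) mod f))"

text \<open>The set S(chi_1, chi_2, sigma_(a,b)), where chi_i restricted to I_K is omega_(tau_0)^(h_i).\<close>
definition serre_S :: "nat \<Rightarrow> nat \<Rightarrow> nat \<Rightarrow> int \<Rightarrow> int \<Rightarrow> (nat \<Rightarrow> int) \<Rightarrow> (nat \<Rightarrow> int)
    \<Rightarrow> (nat set \<times> (nat \<Rightarrow> int)) set" where
  "serre_S p f e h1 h2 a b = {(J, x).
      J \<subseteq> {..<f} \<and> (\<forall>j. f \<le> j \<longrightarrow> x j = 0) \<and>
      (\<forall>j<f. 0 \<le> x j \<and> x j \<le> int e - 1) \<and>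
      h1 mod (int p ^ f - 1) =
        Omega p f (\<lambda>j. if j \<in> J then a j + 1 + x j else b j + x j) 0 mod (int p ^ f - 1) \<and>
      h2 mod (int p ^ f - 1) =
        Omega p f (\<lambda>j. if j \<notin> J then a j + int e - x j else b j + int e - 1 - x j) 0
          mod (int p ^ f - 1)}"

definition rr :: "(nat \<Rightarrow> int) \<Rightarrow> (nat \<Rightarrow> int) \<Rightarrow> nat \<Rightarrow> int" where
  "rr a b j = a j - b j + 1"

definition sJ :: "(nat \<Rightarrow> int) \<Rightarrow> (nat \<Rightarrow> int) \<Rightarrow> nat set \<Rightarrow> (nat \<Rightarrow> int) \<Rightarrow> nat \<Rightarrow> int" where
  "sJ a b J x j = (if j \<in> J then rr a b j + x j else x j)"

definition serre_le :: "nat \<Rightarrow> nat \<Rightarrow> (nat \<Rightarrow> int) \<Rightarrow> (nat \<Rightarrow> int)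
    \<Rightarrow> (nat set \<times> (nat \<Rightarrow> int)) \<Rightarrow> (nat set \<times> (nat \<Rightarrow> int)) \<Rightarrow> bool" where
  "serre_le p f a b u v = (\<forall>j<f. \<exists>m::int. 0 \<le> m \<and>
      Omega p f (\<lambda>i. sJ a b (fst v) (snd v) i - sJ a b (fst u) (snd u) i) j = (int p ^ f - 1) * m)"

definition tJ :: "nat \<Rightarrow> (nat \<Rightarrow> int) \<Rightarrow> (nat \<Rightarrow> int) \<Rightarrow> nat set \<Rightarrow> (nat \<Rightarrow> int) \<Rightarrow> nat \<Rightarrow> int" where
  "tJ e a b J x j = a j - b j + int e - sJ a b J x j"

definition IJ :: "nat \<Rightarrow> (nat \<Rightarrow> int) \<Rightarrow> (nat \<Rightarrow> int) \<Rightarrow> nat set \<Rightarrow> (nat \<Rightarrow> int) \<Rightarrow> nat \<Rightarrow> int set" where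
  "IJ e a b J x j = (if j \<notin> J then {0 .. sJ a b J x j - 1}
                     else insert (tJ e a b J x j) {rr a b j .. sJ a b J x j - 1})"

definition xiJ :: "nat \<Rightarrow> nat \<Rightarrow> nat \<Rightarrow> (nat \<Rightarrow> int) \<Rightarrow> (nat \<Rightarrow> int) \<Rightarrow> nat set \<Rightarrow> (nat \<Rightarrow> int) \<Rightarrow> nat \<Rightarrow> int" where
  "xiJ p f e a b J x j = (int p ^ f - 1) * sJ a b J x j
      + Omega p f (\<lambda>i. sJ a b J x i - tJ e a b J x i) j"

end

theory Submission
  imports Defs
begin

text \<open>Let w be the exponent, on inertia, of the unramified character chi_1 chi_2^-1 chi^-1
  as computed from (J, x). Since Omega(w) \<equiv> 0 mod p^f - 1, the w_j are the digits of a cyclic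
  base-p expansion with integer carries: w_j = p g_(j+1) - g_j. Weak genericity gives
  1 - 2p \<le> w_j \<le> p - 1, which forces g \<le> 1, g \<ge> -2 once p \<ge> 3, and either g \<equiv> 1 or g \<le> 0.
  Modulo p, xi_tau - c (p^f - 1) \<equiv> c - t_tau, so the question is when c \<equiv> t_tau mod p with
  c \<noteq> t_tau. The size of I_tau leaves only c = t_tau \<plusminus> p, and then w_tau cannot be written
  as p g' - g with carries in [-2, 0]. Hence g \<equiv> 1, so every w_kappa attains its upper bound
  p - 1, which forces kappa \<in> J, r_kappa = p and x_kappa = e - 1, i.e. t_kappa = 0,
  s_kappa = p - 1 + e, and c = p.\<close>

lemma vp_pos_iff_dvd:
  assumes "prime p"
  shows "vp p v > 0 \<longleftrightarrow> int p dvd v"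
proof (cases "v = 0")
  case False
  moreover have "prime_elem (int p)" using assms by simp
  ultimately show ?thesis
    by (simp add: vp_def prime_multiplicity_gt_zero_iff enat_0_iff zero_less_iff_neq_zero[symmetric])
qed (simp add: vp_def)

lemma dvd_between_cases:
  fixes d m k :: int
  assumes "m dvd d" and "(k - 1) * m < d" and "d < (k + 2) * m"
  shows "d = k * m \<or> d = (k + 1) * m"
proof -
  obtain q where d: "d = m * q" using assms(1) by blast
  have "m > 0" using assms(2,3) mult_less_cancel_right[of "k - 1" m "k + 2"] by auto
  then have "k - 1 < q" "q < k + 2" using assms(2,3) unfolding d by (simp_all add: mult.commute)
  then show ?thesis unfolding d by auto
qed

lemma Omega_diff: "Omega p f (\<lambda>i. u i - v i) j = Omega p f u j - Omega p f v j"
  by (simp add: Omega_def sum_subtractf right_diff_distrib)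

lemma Omega_mod: "Omega p f w (j mod f) = Omega p f w j"
  by (simp add: Omega_def mod_add_left_eq)

lemma Omega_Suc:
  assumes "1 \<le> f"
  shows "int p * Omega p f w (Suc j) = Omega p f w j + (int p ^ f - 1) * w (j mod f)"
proof -
  have "Omega p f w j + int p ^ f * w (j mod f) = (\<Sum>i<Suc f. int p ^ i * w ((j + i) mod f))"
    by (simp add: Omega_def)
  also have "\<dots> = w (j mod f) + (\<Sum>i<f. int p ^ Suc i * w ((j + Suc i) mod f))"
    by (subst sum.lessThan_Suc_shift) simp
  also have "\<dots> = w (j mod f) + int p * Omega p f w (Suc j)"
    by (simp add: Omega_def sum_distrib_left mult.assoc)
  finally show ?thesis by (simp add: algebra_simps)
qed

lemma dvd_Omega_minus_self:
  assumes "j < f"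
  shows "int p dvd Omega p f w j - w j"
proof -
  obtain f' where f: "f = Suc f'" using assms by (cases f) auto
  have "Omega p f w j - w j = (\<Sum>i<f'. int p ^ Suc i * w ((j + Suc i) mod f))"
    unfolding Omega_def f by (subst sum.lessThan_Suc_shift) (use assms f in simp)
  also have "int p dvd \<dots>" by (intro dvd_sum) simp
  finally show ?thesis .
qed

text \<open>Multiplication by p permutes the Omega's cyclically modulo p^f - 1, and p is a unit there.\<close>
lemma dvd_Omega_shift:
  assumes "1 \<le> f" and "(int p ^ f - 1) dvd Omega p f w 0"
  shows "(int p ^ f - 1) dvd Omega p f w j"
proof (induction j)
  case (Suc j)
  have "coprime (int p ^ f - 1) (int p)"
    using assms(1) coprime_diff_one_left[of "int p ^ f"] by simp
  moreover have "(int p ^ f - 1) dvd int p * Omega p f w (Suc j)"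
    using Omega_Suc[OF assms(1)] Suc by simp
  ultimately show ?case by (simp add: coprime_dvd_mult_right_iff)
qed (use assms in simp)

definition carry :: "nat \<Rightarrow> nat \<Rightarrow> (nat \<Rightarrow> int) \<Rightarrow> nat \<Rightarrow> int" where
  "carry p f w j = Omega p f w j div (int p ^ f - 1)"

lemma carry_mod: "carry p f w (j mod f) = carry p f w j"
  by (simp add: carry_def Omega_mod)

lemma Omega_eq_carry:
  assumes "1 \<le> f" and "(int p ^ f - 1) dvd Omega p f w 0"
  shows "Omega p f w j = (int p ^ f - 1) * carry p f w j"
  using dvd_Omega_shift[OF assms] by (simp add: carry_def)

lemma digit_eq_carry:
  assumes "2 \<le> p" and "1 \<le> f" and "(int p ^ f - 1) dvd Omega p f w 0"
  shows "w (j mod f) = int p * carry p f w (Suc j) - carry p f w j"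
proof -
  let ?N = "int p ^ f - 1"
  have N: "?N > 0" using one_less_power[of "int p" f] assms(1,2) by simp
  have "?N * (int p * carry p f w (Suc j)) = ?N * (carry p f w j + w (j mod f))"
    using Omega_Suc[OF assms(2), of p w j] Omega_eq_carry[OF assms(2,3)]
    by (simp add: algebra_simps)
  then show ?thesis using N by simp
qed

lemma periodic_attains_max:
  fixes g :: "nat \<Rightarrow> 'a::linorder"
  assumes "0 < f" and periodic: "\<And>j. g (j mod f) = g j"
  obtains i where "\<And>j. g j \<le> g (Suc i)"
proof -
  have fin: "finite (g ` {..<f})" and ne: "g ` {..<f} \<noteq> {}" using assms(1) by auto
  obtain k where k: "k < f" "g k = Max (g ` {..<f})" using Max_in[OF fin ne] by auto
  have "g j \<le> g k" for j
    using periodic[of j] k fin assms(1) by (metis Max_ge image_eqI lessThan_iff mod_less_divisor)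
  moreover have "g (Suc (k + f - 1)) = g k"
    using assms(1) periodic[of "k + f"] periodic[of k] by simp
  ultimately show thesis using that by metis
qed

lemma periodic_attains_min:
  fixes g :: "nat \<Rightarrow> int"
  assumes "0 < f" and "\<And>j. g (j mod f) = g j"
  obtains i where "\<And>j. g (Suc i) \<le> g j"
  using periodic_attains_max[of f "\<lambda>j. - g j"] assms by (metis neg_le_iff_le)

lemma periodic_carry_le_one:
  fixes g :: "nat \<Rightarrow> int"
  assumes "2 \<le> p" and "0 < f" and "\<And>j. g (j mod f) = g j"
    and digit_le: "\<And>j. int p * g (Suc j) - g j \<le> int p - 1"
  shows "g j \<le> 1"
proof -
  obtain i where max: "\<And>j. g j \<le> g (Suc i)" using periodic_attains_max assms(2,3) by blast
  have "(int p - 1) * g (Suc i) \<le> (int p - 1) * 1"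
    using digit_le[of i] max[of i] by (simp add: algebra_simps)
  then have "g (Suc i) \<le> 1" by (rule mult_left_le_imp_le) (use assms(1) in simp)
  then show ?thesis using max[of j] by simp
qed

lemma periodic_carry_ge_minus_two:
  fixes g :: "nat \<Rightarrow> int"
  assumes "3 \<le> p" and "0 < f" and "\<And>j. g (j mod f) = g j"
    and digit_ge: "\<And>j. 1 - 2 * int p \<le> int p * g (Suc j) - g j"
  shows "-2 \<le> g j"
proof -
  obtain i where min: "\<And>j. g (Suc i) \<le> g j" using periodic_attains_min assms(2,3) by blast
  have "(int p - 1) * (-3) < (int p - 1) * g (Suc i)"
    using digit_ge[of i] min[of i] assms(1) by (simp add: algebra_simps)
  then have "-3 < g (Suc i)" by (rule mult_left_less_imp_less) (use assms(1) in simp)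
  then show ?thesis using min[of j] by simp
qed

lemma periodic_carry_one_everywhere:
  fixes g :: "nat \<Rightarrow> int"
  assumes "2 \<le> p" and "0 < f" and periodic: "\<And>j. g (j mod f) = g j"
    and digit_le: "\<And>j. int p * g (Suc j) - g j \<le> int p - 1"
    and "g k = 1"
  shows "g j = 1"
proof -
  have le: "g i \<le> 1" for i using periodic_carry_le_one assms(1-4) by blast
  have descend: "g (m + d) = 1 \<Longrightarrow> g m = 1" for m d
  proof (induction d arbitrary: m)
    case (Suc d)
    then have "g (Suc m) = 1" by simp
    then show ?case using digit_le[of m] le[of m] by simp
  qed simp
  have "g (j + (k + f * j - j)) = 1"
    using assms(2,5) periodic[of "k + f * j"] periodic[of k] by (simp add: trans_le_add2)
  then show ?thesis by (rule descend)
qed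

text \<open>Since p^f \<equiv> 1 (mod p), the \<open>Omega\<close> term is congruent to s - t and the two
  multiples of s cancel.\<close>
lemma xiJ_minus_cong_mod_p:
  assumes "j < f"
  shows "int p dvd (xiJ p f e a b J x j - c * (int p ^ f - 1)) - (c - tJ e a b J x j)"
proof -
  let ?s = "sJ a b J x" and ?t = "tJ e a b J x"
  have "(xiJ p f e a b J x j - c * (int p ^ f - 1)) - (c - ?t j)
      = int p ^ f * (?s j - c) + (Omega p f (\<lambda>i. ?s i - ?t i) j - (?s j - ?t j))"
    by (simp add: xiJ_def algebra_simps)
  also have "int p dvd \<dots>"
    using assms dvd_Omega_minus_self[OF assms] by (intro dvd_add dvd_mult2) (simp_all add: dvd_power)
  finally show ?thesis .
qed

locale weakly_generic_setting =
  fixes p f e :: nat and h1 h2 :: int and n a b x :: "nat \<Rightarrow> int" and J :: "nat set"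
  assumes prime: "prime p" and f_pos: "1 \<le> f"
    and chi: "(h1 - h2) mod (int p ^ f - 1) = Omega p f n 0 mod (int p ^ f - 1)"
    and weakly_generic: "\<forall>j<f. int e \<le> n j \<and> n j \<le> int p - int e"
    and serre_wt: "\<forall>j<f. 0 \<le> a j - b j \<and> a j - b j \<le> int p - 1"
    and mem: "(J, x) \<in> serre_S p f e h1 h2 a b"
begin

abbreviation "r \<equiv> rr a b"
abbreviation "s \<equiv> sJ a b J x"
abbreviation "t \<equiv> tJ e a b J x"

text \<open>The exponent w of chi_1 chi_2^-1 chi^-1 on inertia read off from (J, x); this character
  is unramified, so Omega(w) vanishes modulo p^f - 1.\<close>
definition defect :: "nat \<Rightarrow> int" where
  "defect j = (if j \<in> J then a j + 1 + x j else b j + x j)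
    - (if j \<notin> J then a j + int e - x j else b j + int e - 1 - x j) - n j"

abbreviation "g \<equiv> carry p f defect"

lemma p_ge_2: "2 \<le> p"
  using prime prime_ge_2_nat by blast

lemma f_gt_0: "0 < f"
  using f_pos by simp

lemma x_bounds: "j < f \<Longrightarrow> 0 \<le> x j \<and> x j \<le> int e - 1"
  using mem by (simp add: serre_S_def)

lemma r_bounds: "j < f \<Longrightarrow> 1 \<le> r j \<and> r j \<le> int p"
  using serre_wt by (force simp: rr_def)

lemma n_bounds: "j < f \<Longrightarrow> int e \<le> n j \<and> n j \<le> int p - int e"
  using weakly_generic by simp

lemma defect_in_J: "j \<in> J \<Longrightarrow> defect j = r j + 2 * x j + 1 - int e - n j"
  by (simp add: defect_def rr_def)

lemma defect_notin_J: "j \<notin> J \<Longrightarrow> defect j = 2 * x j - r j + 1 - int e - n j"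
  by (simp add: defect_def rr_def)

lemma dvd_Omega_defect: "(int p ^ f - 1) dvd Omega p f defect 0"
proof -
  let ?N = "int p ^ f - 1"
  let ?\<alpha> = "\<lambda>j. if j \<in> J then a j + 1 + x j else b j + x j"
  let ?\<beta> = "\<lambda>j. if j \<notin> J then a j + int e - x j else b j + int e - 1 - x j"
  have "?N dvd h1 - Omega p f ?\<alpha> 0" "?N dvd h2 - Omega p f ?\<beta> 0"
    "?N dvd (h1 - h2) - Omega p f n 0"
    using mem chi by (simp_all add: serre_S_def mod_eq_dvd_iff)
  then have "?N dvd (h1 - h2) - Omega p f n 0 - ((h1 - Omega p f ?\<alpha> 0) - (h2 - Omega p f ?\<beta> 0))"
    by (blast intro: dvd_diff)
  also have "(h1 - h2) - Omega p f n 0 - ((h1 - Omega p f ?\<alpha> 0) - (h2 - Omega p f ?\<beta> 0))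
      = Omega p f defect 0"
    unfolding defect_def by (simp add: Omega_diff)
  finally show ?thesis .
qed

lemma defect_eq_carry: "defect (j mod f) = int p * g (Suc j) - g j"
  using digit_eq_carry[OF p_ge_2 f_pos dvd_Omega_defect] .

lemma defect_le: "j < f \<Longrightarrow> defect j \<le> int p - 1"
  using x_bounds r_bounds n_bounds defect_in_J defect_notin_J
  by (cases "j \<in> J") (fastforce+)

lemma defect_ge: "j < f \<Longrightarrow> 1 - 2 * int p \<le> defect j"
  using x_bounds r_bounds n_bounds defect_in_J defect_notin_J
  by (cases "j \<in> J") (fastforce+)

lemma defect_notin_J_le: "j < f \<Longrightarrow> j \<notin> J \<Longrightarrow> defect j \<le> -2"
  using x_bounds r_bounds n_bounds defect_notin_J by fastforce

lemma defect_eq_top: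
  assumes "j < f" and "defect j = int p - 1"
  shows "j \<in> J \<and> r j = int p \<and> x j = int e - 1"
proof -
  have "j \<in> J" using defect_notin_J_le[OF assms(1)] assms(2) p_ge_2 by force
  then show ?thesis using assms x_bounds r_bounds n_bounds defect_in_J by fastforce
qed

lemma carry_digit_le: "int p * g (Suc j) - g j \<le> int p - 1"
  using defect_eq_carry[of j] defect_le[of "j mod f"] f_gt_0 by simp

lemma carry_digit_ge: "1 - 2 * int p \<le> int p * g (Suc j) - g j"
  using defect_eq_carry[of j] defect_ge[of "j mod f"] f_gt_0 by simp

lemma carry_le_one: "g j \<le> 1"
  by (rule periodic_carry_le_one[OF p_ge_2 f_gt_0 carry_mod carry_digit_le])

lemma carry_ge_minus_two: "3 \<le> p \<Longrightarrow> -2 \<le> g j"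
  by (rule periodic_carry_ge_minus_two[OF _ f_gt_0 carry_mod carry_digit_ge])

lemma carry_dichotomy: "(\<forall>j. g j = 1) \<or> (\<forall>j. g j \<le> 0)"
  using periodic_carry_one_everywhere[OF p_ge_2 f_gt_0 carry_mod carry_digit_le] carry_le_one
  by (metis int_one_le_iff_zero_less not_le order_antisym)

lemma other_root_notin_J_bounds:
  assumes "j < f" and "j \<notin> J" and "c \<in> IJ e a b J x j"
    and "int p dvd c - t j" and "c \<noteq> t j"
  shows "2 \<le> e \<and> 3 - 2 * int p \<le> defect j \<and> defect j \<le> -1 - int p"
proof -
  have c: "0 \<le> c" "c \<le> x j - 1" and t: "t j = r j - 1 + int e - x j"
    using assms(2,3) by (auto simp: IJ_def sJ_def tJ_def rr_def)
  note bounds = x_bounds[OF assms(1)] r_bounds[OF assms(1)] n_bounds[OF assms(1)]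
  have "-2 * int p < c - t j" "c - t j < int p"
    using c t bounds by linarith+
  then have "c - t j = -1 * int p \<or> c - t j = 0 * int p"
    using dvd_between_cases[of "int p" "c - t j" "-1"] assms(4) by simp
  then have "c = t j - int p" using assms(5) by simp
  then show ?thesis using c t bounds defect_notin_J[OF assms(2)] by linarith
qed

lemma no_other_root_notin_J:
  assumes "j < f" and "j \<notin> J" and "c \<in> IJ e a b J x j"
    and "int p dvd c - t j" and "c \<noteq> t j"
  shows False
proof -
  have e: "2 \<le> e" and defect: "3 - 2 * int p \<le> defect j" "defect j \<le> -1 - int p"
    using other_root_notin_J_bounds[OF assms] by auto
  have digit: "defect j = int p * g (Suc j) - g j"
    using defect_eq_carry[of j] assms(1) by simp
  show False
  proof (cases "\<forall>i. g i = 1")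
    case True
    then show False using digit defect p_ge_2 by simp
  next
    case False
    have "3 \<le> p" using n_bounds[OF assms(1)] e by linarith
    then have carry_range: "-2 \<le> g i \<and> g i \<le> 0" for i
      using carry_dichotomy False carry_ge_minus_two by blast
    have "int p * g (Suc j) < int p * (-1)" using digit defect carry_range[of j] by linarith
    then have "g (Suc j) < -1" by (rule mult_left_less_imp_less) simp
    then have "g (Suc j) = -2" using carry_range[of "Suc j"] by linarith
    then have "defect j = -2 * int p - g j" using digit by simp
    then show False using defect carry_range[of j] by linarith
  qed
qed

lemma other_root_in_J_eq:
  assumes "j < f" and "j \<in> J" and "c \<in> IJ e a b J x j"
    and "int p dvd c - t j" and "c \<noteq> t j"
  shows "c = t j + int p \<and> 3 \<le> defect j"
proof -
  have c: "r j \<le> c" "c \<le> r j + x j - 1" and t: "t j = int e - 1 - x j"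
    using assms(2,3,5) by (auto simp: IJ_def sJ_def tJ_def rr_def)
  note bounds = x_bounds[OF assms(1)] r_bounds[OF assms(1)] n_bounds[OF assms(1)]
  have "- int p < c - t j" "c - t j < 2 * int p"
    using c t bounds by linarith+
  then have "c - t j = 0 * int p \<or> c - t j = 1 * int p"
    using dvd_between_cases[of "int p" "c - t j" 0] assms(4) by simp
  then have "c = t j + int p" using assms(5) by simp
  then show ?thesis using c t bounds defect_in_J[OF assms(2)] by linarith
qed

lemma carry_eq_one_if_defect_ge_3:
  assumes "j < f" and "3 \<le> defect j"
  shows "g i = 1"
proof (rule ccontr)
  assume "g i \<noteq> 1"
  then have "g k \<le> 0" for k using carry_dichotomy by blast
  then have "int p * g (Suc j) \<le> 0" by (simp add: mult_nonneg_nonpos)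
  moreover have "3 \<le> p" using defect_le[OF assms(1)] assms(2) by linarith
  then have "-2 \<le> g j" by (rule carry_ge_minus_two)
  moreover have "defect j = int p * g (Suc j) - g j"
    using defect_eq_carry[of j] assms(1) by simp
  ultimately show False using assms(2) by linarith
qed

lemma extremal_if_carry_eq_one:
  assumes "\<And>i. g i = 1" and "k < f"
  shows "t k = 0 \<and> s k = int p - 1 + int e \<and> r k = int p"
proof -
  have "defect k = int p - 1" using defect_eq_carry[of k] assms by simp
  then have "k \<in> J \<and> r k = int p \<and> x k = int e - 1" using defect_eq_top assms(2) by blast
  then show ?thesis by (simp add: tJ_def sJ_def rr_def)
qed

lemma vp_xi_minus_pos_iff:
  assumes "j < f" and "c \<in> IJ e a b J x j"
  shows "vp p (xiJ p f e a b J x j - c * (int p ^ f - 1)) > 0 \<longleftrightarrow>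
    c = t j \<or> ((\<forall>k<f. t k = 0 \<and> s k = int p - 1 + int e \<and> r k = int p) \<and> c = int p)"
proof -
  have "vp p (xiJ p f e a b J x j - c * (int p ^ f - 1)) > 0 \<longleftrightarrow> int p dvd c - t j"
    using vp_pos_iff_dvd[OF prime] xiJ_minus_cong_mod_p[OF assms(1), of p e a b J x c]
    by (metis dvd_add_right_iff diff_add_cancel)
  moreover have "(\<forall>k<f. t k = 0 \<and> s k = int p - 1 + int e \<and> r k = int p) \<and> c = int p"
    if "int p dvd c - t j" and "c \<noteq> t j"
  proof -
    have "j \<in> J" using no_other_root_notin_J assms that by blast
    then have c: "c = t j + int p" and "3 \<le> defect j" using other_root_in_J_eq assms that by blast+
    then have "\<forall>k<f. t k = 0 \<and> s k = int p - 1 + int e \<and> r k = int p"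
      using extremal_if_carry_eq_one carry_eq_one_if_defect_ge_3 assms(1) by blast
    then show ?thesis using c assms(1) by simp
  qed
  moreover have "int p dvd c - t j" if "c = t j \<or> (\<forall>k<f. t k = 0) \<and> c = int p"
    using that assms(1) by auto
  ultimately show ?thesis by blast
qed

end

theorem proposition5p11:
  fixes p f e :: nat and h1 h2 :: int and n a b x :: "nat \<Rightarrow> int" and J :: "nat set"
  assumes "prime p" and "1 \<le> f" and "1 \<le> e"
    and chi: "(h1 - h2) mod (int p ^ f - 1) = Omega p f n 0 mod (int p ^ f - 1)"
    and n_range: "\<forall>j<f. 1 \<le> n j \<and> n j \<le> int p"
    and n_lt: "\<exists>j<f. n j < int p"
    and weakly_generic: "\<forall>j<f. int e \<le> n j \<and> n j \<le> int p - int e"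
    and serre_wt: "\<forall>j<f. 0 \<le> a j - b j \<and> a j - b j \<le> int p - 1"
    and nonempty: "serre_S p f e h1 h2 a b \<noteq> {}"
    and mem: "(J, x) \<in> serre_S p f e h1 h2 a b"
    and maximal: "\<forall>y \<in> serre_S p f e h1 h2 a b. serre_le p f a b y (J, x)"
  shows "\<forall>j<f. \<forall>c \<in> IJ e a b J x j.
           (vp p (xiJ p f e a b J x j - c * (int p ^ f - 1)) > 0 \<longleftrightarrow>
             (c = tJ e a b J x j \<or>
              ((\<forall>k<f. tJ e a b J x k = 0 \<and> sJ a b J x k = int p - 1 + int e \<and> rr a b k = int p)
               \<and> c = int p)))"
proof -
  interpret weakly_generic_setting p f e h1 h2 n a b x J
    using assms by unfold_locales
  show ?thesis using vp_xi_minus_pos_iff by blast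
qed

end
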